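(* Let $X,X_1,X_2,\dots$ be real random variables on a probability space $(\Omega,\mathcal{F},P)$. Suppose that for every $\varepsilon>0$, $\sum_{n=1}^\infty P(|X_n-X|\ge\varepsilon)<\infty$, and that for some $\varepsilon>0$, $\sum_{n=1}^\infty E\big[|X_n-X|\,I_{\{|X_n-X|<\varepsilon\}}\big]<\infty$. Then for every bounded Lipschitz continuous function $f:\mathbb{R}\to\mathbb{R}$, $\sum_{n=1}^\infty E[|f(X_n)-f(X)|]<\infty$. Consequently, for every bounded Lipschitz continuous function $f:\mathbb{R}\to\mathbb{R}$, $\sum_{n=1}^\infty |E[f(X_n)-f(X)]|<\infty$.
   Context: $I_A$ denotes the indicator function of the event $A$. *)

theory Defs
  imports "HOL-Probability.Probability"
begin

end

theory Submission
  imports Defs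
begin

text \<open>On the event \<open>|X\<^sub>n - X| < \<epsilon>\<close> the Lipschitz constant \<open>L\<close> of \<open>f\<close> gives
  \<open>|f(X\<^sub>n) - f(X)| \<le> L |X\<^sub>n - X|\<close>, on its complement boundedness gives \<open>|f(X\<^sub>n) - f(X)| \<le> 2 sup|f|\<close>.
  Hence \<open>E|f(X\<^sub>n) - f(X)| \<le> L E[|X\<^sub>n - X| I\<^bsub>|X\<^sub>n - X| < \<epsilon>\<^esub>] + 2 sup|f| P(|X\<^sub>n - X| \<ge> \<epsilon>)\<close>,
  and both terms are summable (only the tail condition at the given \<open>\<epsilon>\<close> is used).
  The second claim follows from \<open>|E g| \<le> E|g|\<close>.\<close>

lemma lipschitz_bounded_diff_le:
  fixes f :: "'a::metric_space \<Rightarrow> real"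
  assumes "L-lipschitz_on UNIV f" and "\<And>x. \<bar>f x\<bar> \<le> B"
  shows "\<bar>f x - f y\<bar> \<le> (if dist x y < e then L * dist x y else 2 * B)"
proof -
  have "\<bar>f x - f y\<bar> \<le> L * dist x y"
    using lipschitz_onD[OF assms(1)] by (simp add: dist_real_def)
  moreover have "\<bar>f x - f y\<bar> \<le> 2 * B"
    using assms(2)[of x] assms(2)[of y] by linarith
  ultimately show ?thesis by simp
qed

lemma (in finite_measure) integral_lipschitz_diff_le:
  fixes f :: "real \<Rightarrow> real"
  assumes f: "L-lipschitz_on UNIV f" "\<And>x. \<bar>f x\<bar> \<le> B"
    and Y: "Y \<in> borel_measurable M" and Z: "Z \<in> borel_measurable M"
  shows "(\<integral>\<omega>. \<bar>f (Y \<omega>) - f (Z \<omega>)\<bar> \<partial>M) \<le>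
           L * (\<integral>\<omega>. \<bar>Y \<omega> - Z \<omega>\<bar> * indicator {\<omega> \<in> space M. \<bar>Y \<omega> - Z \<omega>\<bar> < e} \<omega> \<partial>M)
           + 2 * B * measure M {\<omega> \<in> space M. \<bar>Y \<omega> - Z \<omega>\<bar> \<ge> e}"
    (is "_ \<le> L * integral\<^sup>L M ?near + 2 * B * measure M ?Far")
proof -
  have "f \<in> borel_measurable borel"
    using f(1) by (intro borel_measurable_continuous_onI lipschitz_on_continuous_on)
  moreover have "\<bar>f x - f y\<bar> \<le> 2 * B" for x y
    using f(2)[of x] f(2)[of y] by linarith
  ultimately have int_diff: "integrable M (\<lambda>\<omega>. \<bar>f (Y \<omega>) - f (Z \<omega>)\<bar>)"
    using Y Z by (intro integrable_const_bound[where B = "2 * B"] AE_I2) auto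
  have int_near: "integrable M ?near"
    using Y Z by (intro integrable_const_bound[where B = "\<bar>e\<bar>"] AE_I2) (auto simp: indicator_def)
  have Far: "?Far \<in> sets M"
    using Y Z by measurable
  have "(\<integral>\<omega>. \<bar>f (Y \<omega>) - f (Z \<omega>)\<bar> \<partial>M) \<le> (\<integral>\<omega>. L * ?near \<omega> + 2 * B * indicator ?Far \<omega> \<partial>M)"
  proof (rule integral_mono)
    fix \<omega> assume "\<omega> \<in> space M"
    then show "\<bar>f (Y \<omega>) - f (Z \<omega>)\<bar> \<le> L * ?near \<omega> + 2 * B * indicator ?Far \<omega>"
      using lipschitz_bounded_diff_le[OF f, of "Y \<omega>" "Z \<omega>" e]
      unfolding dist_real_def by (simp add: indicator_def split: if_splits)
  qed (use int_diff int_near Far in \<open>auto simp: emeasure_eq_measure\<close>)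
  also have "\<dots> = L * integral\<^sup>L M ?near + 2 * B * measure M ?Far"
    using int_near Far by (simp add: emeasure_eq_measure)
  finally show ?thesis .
qed

lemma (in finite_measure) summable_integral_lipschitz_diff:
  fixes f :: "real \<Rightarrow> real"
  assumes f: "L-lipschitz_on UNIV f" "\<And>x. \<bar>f x\<bar> \<le> B"
    and Y: "\<And>n. Y n \<in> borel_measurable M" and Z: "Z \<in> borel_measurable M"
    and tail: "summable (\<lambda>n. measure M {\<omega> \<in> space M. \<bar>Y n \<omega> - Z \<omega>\<bar> \<ge> e})"
    and near: "summable (\<lambda>n. \<integral>\<omega>. \<bar>Y n \<omega> - Z \<omega>\<bar> * indicator {\<omega> \<in> space M. \<bar>Y n \<omega> - Z \<omega>\<bar> < e} \<omega> \<partial>M)"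
  shows "summable (\<lambda>n. \<integral>\<omega>. \<bar>f (Y n \<omega>) - f (Z \<omega>)\<bar> \<partial>M)"
proof (rule summable_comparison_test)
  show "\<exists>N. \<forall>n\<ge>N. norm (\<integral>\<omega>. \<bar>f (Y n \<omega>) - f (Z \<omega>)\<bar> \<partial>M) \<le>
      L * (\<integral>\<omega>. \<bar>Y n \<omega> - Z \<omega>\<bar> * indicator {\<omega> \<in> space M. \<bar>Y n \<omega> - Z \<omega>\<bar> < e} \<omega> \<partial>M)
      + 2 * B * measure M {\<omega> \<in> space M. \<bar>Y n \<omega> - Z \<omega>\<bar> \<ge> e}"
    using integral_lipschitz_diff_le[OF f Y Z] by auto
  show "summable (\<lambda>n. L * (\<integral>\<omega>. \<bar>Y n \<omega> - Z \<omega>\<bar> * indicator {\<omega> \<in> space M. \<bar>Y n \<omega> - Z \<omega>\<bar> < e} \<omega> \<partial>M)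
      + 2 * B * measure M {\<omega> \<in> space M. \<bar>Y n \<omega> - Z \<omega>\<bar> \<ge> e})"
    using near tail by (intro summable_add summable_mult)
qed

lemma summable_abs_integral:
  fixes g :: "nat \<Rightarrow> 'a \<Rightarrow> real"
  assumes "summable (\<lambda>n. \<integral>\<omega>. \<bar>g n \<omega>\<bar> \<partial>M)"
  shows "summable (\<lambda>n. \<bar>\<integral>\<omega>. g n \<omega> \<partial>M\<bar>)"
proof (rule summable_comparison_test)
  have "\<bar>\<integral>\<omega>. g n \<omega> \<partial>M\<bar> \<le> (\<integral>\<omega>. \<bar>g n \<omega>\<bar> \<partial>M)" for n
    using integral_norm_bound[of M "g n"] by simp
  then show "\<exists>N. \<forall>n\<ge>N. norm \<bar>\<integral>\<omega>. g n \<omega> \<partial>M\<bar> \<le> (\<integral>\<omega>. \<bar>g n \<omega>\<bar> \<partial>M)"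
    by auto
qed (fact assms)

theorem proposition3p3:
  fixes M :: "'a measure" and X :: "'a \<Rightarrow> real" and Xn :: "nat \<Rightarrow> 'a \<Rightarrow> real"
  assumes "prob_space M"
    and "X \<in> borel_measurable M"
    and "\<And>n. Xn n \<in> borel_measurable M"
    and "\<And>\<epsilon>::real. \<epsilon> > 0 \<Longrightarrow>
           summable (\<lambda>n. measure M {\<omega> \<in> space M. \<bar>Xn (Suc n) \<omega> - X \<omega>\<bar> \<ge> \<epsilon>})"
    and "\<exists>\<epsilon>::real. \<epsilon> > 0 \<and>
           summable (\<lambda>n. integral\<^sup>L M (\<lambda>\<omega>. \<bar>Xn (Suc n) \<omega> - X \<omega>\<bar> *
              indicator {\<omega> \<in> space M. \<bar>Xn (Suc n) \<omega> - X \<omega>\<bar> < \<epsilon>} \<omega>))"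
  shows "\<forall>f :: real \<Rightarrow> real. bounded (range f) \<and> (\<exists>L. L-lipschitz_on UNIV f) \<longrightarrow>
           summable (\<lambda>n. integral\<^sup>L M (\<lambda>\<omega>. \<bar>f (Xn (Suc n) \<omega>) - f (X \<omega>)\<bar>))
           \<and> summable (\<lambda>n. \<bar>integral\<^sup>L M (\<lambda>\<omega>. f (Xn (Suc n) \<omega>) - f (X \<omega>))\<bar>)"
proof (intro allI impI)
  fix f :: "real \<Rightarrow> real"
  assume "bounded (range f) \<and> (\<exists>L. L-lipschitz_on UNIV f)"
  then obtain L B where L: "L-lipschitz_on UNIV f" and B: "\<And>x. \<bar>f x\<bar> \<le> B"
    unfolding bounded_real by blast
  interpret prob_space M by fact
  obtain e where "e > 0" and near: "summable (\<lambda>n. \<integral>\<omega>. \<bar>Xn (Suc n) \<omega> - X \<omega>\<bar> *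
      indicator {\<omega> \<in> space M. \<bar>Xn (Suc n) \<omega> - X \<omega>\<bar> < e} \<omega> \<partial>M)"
    using assms(5) by blast
  have "summable (\<lambda>n. \<integral>\<omega>. \<bar>f (Xn (Suc n) \<omega>) - f (X \<omega>)\<bar> \<partial>M)"
    using summable_integral_lipschitz_diff[OF L B assms(3) assms(2) assms(4)[OF \<open>e > 0\<close>] near] .
  then show "summable (\<lambda>n. \<integral>\<omega>. \<bar>f (Xn (Suc n) \<omega>) - f (X \<omega>)\<bar> \<partial>M)
      \<and> summable (\<lambda>n. \<bar>\<integral>\<omega>. f (Xn (Suc n) \<omega>) - f (X \<omega>) \<partial>M\<bar>)"
    using summable_abs_integral[where g = "\<lambda>n \<omega>. f (Xn (Suc n) \<omega>) - f (X \<omega>)"] by simp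
qed

end
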